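(* (1) If $\mathcal A=(X,(A,A^\vee),\kappa)$ is a cospectral algebraic quotient vector bundle, then for every open $U\subset X$, $\gamma_{F\circ\kappa}(U)=F\bigl(\gamma^\complement_\kappa(X\setminus U)\bigr)$; that is, $\complement\colon(\Omega X,(A^\vee,A),\gamma_{F\circ\kappa})\to((\mathcal CX)^{\mathrm{op}},(A^\vee,A),F\circ\gamma^\complement_\kappa)$, $U\mapsto X\setminus U$, is an $\mathrm{id}$-isomorphism. (2) If $\mathcal A=(X,(A,A^\vee),\kappa)$ is spectral, then for every closed $C\subset X$, $\gamma^\complement_{F\circ\kappa}(C)=F\bigl(\gamma_\kappa(X\setminus C)\bigr)$; that is, $\complement\colon((\Omega X)^{\mathrm{op}},(A^\vee,A),F\circ\gamma_\kappa)\to(\mathcal CX,(A^\vee,A),\gamma^\complement_{F\circ\kappa})$ is an $\mathrm{id}$-isomorphism. (3) For any algebraic linearized colocale $\mathfrak A^\complement=(L^\complement,(A,A^\vee),\gamma^\complement)$, the algebraic quotient vector bundles $\boldsymbol\Sigma\bigl((\mathfrak A^\complement)^\vee\bigr)$ and $(\boldsymbol I\mathfrak A^\complement)^\vee$ are isomorphic. (4) For any algebraic linearized locale $\mathfrak A=(L,(A,A^\vee),\gamma)$, the algebraic quotient vector bundles $(\boldsymbol\Sigma\mathfrak A)^\vee$ and $\boldsymbol I(\mathfrak A^\vee)$ are isomorphic.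
   Context: A dual pair $(A,A^\vee)$ consists of complex vector spaces with a non-degenerate bilinear form $\langle\cdot,\cdot\rangle\colon A\times A^\vee\to\mathbb C$. For subspaces $V\subset A$, $\mathcal V\subset A^\vee$: $F(V)=\{\phi:\langle a,\phi\rangle=0\ \forall a\in V\}$, $G(\mathcal V)=\{a:\langle a,\phi\rangle=0\ \forall\phi\in\mathcal V\}$. $\mathrm{Max}\,A$ is the image of $G$, $\mathrm{Max}\,A^\vee$ the image of $F$; these are complete lattices, with join in $\mathrm{Max}\,A$ given by $\bigvee V_\alpha=G F(\mathrm{span}\bigcup V_\alpha)$ (similarly in $\mathrm{Max}\,A^\vee$). The pair $(A^\vee,A)$ is a dual pair with the transposed form. An algebraic quotient vector bundle is $(X,(A,A^\vee),\kappa)$, $X$ a space, $\kappa\colon X\to\mathrm{Max}\,A$ any map; its codual is $(X,(A^\vee,A),F\circ\kappa)$. It is spectral if $\{x:a\notin\kappa(x)\}$ is open for each $a\in A$, cospectral if $\{x:\kappa(x)\subset V\}$ is closed for each $V\in\mathrm{Max}\,A$. Restriction map: $\gamma_\kappa(U)=\mathrm{span}\{a:\mathrm{int}\{x:a\notin\kappa(x)\}\subset U\}$ for $U$ open. Corestriction map: $\gamma^\complement_\kappa(C)=\bigvee_{x\in C}\kappa(x)$ (join in $\mathrm{Max}\,A$) for $C$ closed. $\Omega X$, $\mathcal CX$: open and closed sets, $\mathrm{op}$ denotes opposite order. An $\mathrm{id}$-isomorphism $(L_1,(B,B^\vee),\gamma_1)\to(L_2,(B,B^\vee),\gamma_2)$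 is a lattice isomorphism $h\colon L_1\to L_2$ with $\gamma_1=\gamma_2\circ h$. An algebraic linearized locale is $(L,(A,A^\vee),\gamma)$, $L$ a locale, $\gamma\colon L\to\mathrm{Max}\,A$ meet-preserving; an algebraic linearized colocale is $(L^\complement,(A,A^\vee),\gamma^\complement)$, $L^\complement$ a complete lattice whose opposite is a locale, $\gamma^\complement\colon L^\complement\to\mathrm{Max}\,A$ join-preserving. Codual of a linearized locale: $\mathfrak A^\vee=(L^{\mathrm{op}},(A^\vee,A),F\circ\gamma)$; codual of a linearized colocale: $(\mathfrak A^\complement)^\vee=((L^\complement)^{\mathrm{op}},(A^\vee,A),F\circ\gamma^\complement)$. For a locale $L$, $\Sigma L$ is the set of primes ($p\ne1$, $a\wedge b\le p\Rightarrow a\le p$ or $b\le p$) with open sets $\{p:a\not\le p\}$; $\boldsymbol\Sigma(L,(A,A^\vee),\gamma)=(\Sigma L,(A,A^\vee),\gamma|_{\Sigma L})$. For a colocale, $IL^\complement$ is the set of $c\ne0$ with $c\le a\vee b\Rightarrow c\le a$ or $c\le b$, closed sets $\{c:c\le a\}$; $\boldsymbol I(L^\complement,(A,A^\vee),\gamma^\complement)=(IL^\complement,(A,A^\vee),\gamma^\complement|_{IL^\complement})$. An isomorphism between algebraic quotient vector bundles $(X,(B,B^\vee),\kappa_1)$ and $(Y,(B,B^\vee),\kappa_2)$ with the same dual pair is a homeomorphism $h\colon X\to Y$ with $\kappa_2\circ h=\kappa_1$. *)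

theory Defs
  imports "HOL-Analysis.Analysis" "HOL-Library.Dual_Ordered_Lattice"
begin

(* A dual pair (A, A^v): A is the whole type 'a with complex scalar multiplication sa,
   A^v is the whole type 'b with scalar multiplication sb, and p is a non-degenerate
   bilinear form A x A^v -> C. *)
definition dual_pair ::
  "(complex \<Rightarrow> 'a::ab_group_add \<Rightarrow> 'a) \<Rightarrow> (complex \<Rightarrow> 'b::ab_group_add \<Rightarrow> 'b)
   \<Rightarrow> ('a \<Rightarrow> 'b \<Rightarrow> complex) \<Rightarrow> bool" where
  "dual_pair sa sb p \<longleftrightarrow>
     vector_space sa \<and> vector_space sb \<and>
     (\<forall>x y f. p (x + y) f = p x f + p y f) \<and>
     (\<forall>c x f. p (sa c x) f = c * p x f) \<and>
     (\<forall>x f g. p x (f + g) = p x f + p x g) \<and>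
     (\<forall>c x f. p x (sb c f) = c * p x f) \<and>
     (\<forall>x. (\<forall>f. p x f = 0) \<longrightarrow> x = 0) \<and>
     (\<forall>f. (\<forall>x. p x f = 0) \<longrightarrow> f = 0)"

definition tr :: "('a \<Rightarrow> 'b \<Rightarrow> complex) \<Rightarrow> 'b \<Rightarrow> 'a \<Rightarrow> complex" where
  "tr p = (\<lambda>f a. p a f)"

definition F_of :: "('a \<Rightarrow> 'b \<Rightarrow> complex) \<Rightarrow> 'a set \<Rightarrow> 'b set" where
  "F_of p V = {f. \<forall>a\<in>V. p a f = 0}"

definition G_of :: "('a \<Rightarrow> 'b \<Rightarrow> complex) \<Rightarrow> 'b set \<Rightarrow> 'a set" where
  "G_of p W = {a. \<forall>f\<in>W. p a f = 0}"

definition Max_of :: "('a \<Rightarrow> 'b \<Rightarrow> complex) \<Rightarrow> 'a set set" where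
  "Max_of p = range (G_of p)"

definition join_of :: "(complex \<Rightarrow> 'a::ab_group_add \<Rightarrow> 'a) \<Rightarrow> ('a \<Rightarrow> 'b \<Rightarrow> complex)
    \<Rightarrow> 'a set set \<Rightarrow> 'a set" where
  "join_of s p Vs = G_of p (F_of p (module.span s (\<Union>Vs)))"

definition qvb :: "('a \<Rightarrow> 'b \<Rightarrow> complex) \<Rightarrow> 'x topology \<Rightarrow> ('x \<Rightarrow> 'a set) \<Rightarrow> bool" where
  "qvb p X \<kappa> \<longleftrightarrow> (\<forall>x\<in>topspace X. \<kappa> x \<in> Max_of p)"

definition spectral :: "'x topology \<Rightarrow> ('x \<Rightarrow> 'a set) \<Rightarrow> bool" where
  "spectral X \<kappa> \<longleftrightarrow> (\<forall>a. openin X {x \<in> topspace X. a \<notin> \<kappa> x})"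

definition cospectral :: "('a \<Rightarrow> 'b \<Rightarrow> complex) \<Rightarrow> 'x topology \<Rightarrow> ('x \<Rightarrow> 'a set) \<Rightarrow> bool" where
  "cospectral p X \<kappa> \<longleftrightarrow> (\<forall>V\<in>Max_of p. closedin X {x \<in> topspace X. \<kappa> x \<subseteq> V})"

definition restr :: "(complex \<Rightarrow> 'a::ab_group_add \<Rightarrow> 'a) \<Rightarrow> 'x topology \<Rightarrow> ('x \<Rightarrow> 'a set)
    \<Rightarrow> 'x set \<Rightarrow> 'a set" where
  "restr s X \<kappa> U = module.span s {a. X interior_of {x \<in> topspace X. a \<notin> \<kappa> x} \<subseteq> U}"

definition corestr :: "(complex \<Rightarrow> 'a::ab_group_add \<Rightarrow> 'a) \<Rightarrow> ('a \<Rightarrow> 'b \<Rightarrow> complex)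
    \<Rightarrow> 'x topology \<Rightarrow> ('x \<Rightarrow> 'a set) \<Rightarrow> 'x set \<Rightarrow> 'a set" where
  "corestr s p X \<kappa> C = join_of s p (\<kappa> ` C)"

(* id-isomorphism (L1,(B,B^v),\<gamma>1) \<rightarrow> (L2,(B,B^v),\<gamma>2): lattice (= order) isomorphism h
   with \<gamma>1 = \<gamma>2 \<circ> h *)
definition id_iso :: "'u set \<Rightarrow> ('u \<Rightarrow> 'u \<Rightarrow> bool) \<Rightarrow> 'v set \<Rightarrow> ('v \<Rightarrow> 'v \<Rightarrow> bool)
    \<Rightarrow> ('u \<Rightarrow> 'c) \<Rightarrow> ('v \<Rightarrow> 'c) \<Rightarrow> ('u \<Rightarrow> 'v) \<Rightarrow> bool" where
  "id_iso L1 le1 L2 le2 g1 g2 h \<longleftrightarrow>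
     bij_betw h L1 L2 \<and> (\<forall>x\<in>L1. \<forall>y\<in>L1. le1 x y \<longleftrightarrow> le2 (h x) (h y)) \<and>
     (\<forall>x\<in>L1. g1 x = g2 (h x))"

definition frame_law :: "'l::complete_lattice itself \<Rightarrow> bool" where
  "frame_law _ \<longleftrightarrow> (\<forall>(a::'l) S. inf a (Sup S) = Sup (inf a ` S))"

definition colocale_law :: "'l::complete_lattice itself \<Rightarrow> bool" where
  "colocale_law _ \<longleftrightarrow> frame_law TYPE('l dual)"

definition Sigma_pts :: "'l::complete_lattice set" where
  "Sigma_pts = {p. p \<noteq> top \<and> (\<forall>a b. inf a b \<le> p \<longrightarrow> a \<le> p \<or> b \<le> p)}"

definition Sigma_top :: "'l::complete_lattice topology" where
  "Sigma_top = topology (\<lambda>U. \<exists>a. U = {p \<in> Sigma_pts. \<not> a \<le> p})"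

definition I_pts :: "'l::complete_lattice set" where
  "I_pts = {c. c \<noteq> bot \<and> (\<forall>a b. c \<le> sup a b \<longrightarrow> c \<le> a \<or> c \<le> b)}"

definition I_top :: "'l::complete_lattice topology" where
  "I_top = topology (\<lambda>U. \<exists>a. U = I_pts - {c \<in> I_pts. c \<le> a})"

end

(* Once the support sets {x. a \<notin> \<kappa> x} are open, restr \<kappa> U is the span of the a lying in every
   fibre over the complement of U. For the codual F \<circ> \<kappa> of a cospectral bundle the support of \<phi> is
   the complement of the closed set {x. \<kappa> x \<subseteq> G {\<phi>}}, and annihilating the join G F (span \<Union>) of
   the fibres over the complement gives the same set F (\<Union>). Dually, for a spectral bundle both sides
   of (2) are F of the intersection of the fibres over C, using G F V = V on Max A.
   In (3) and (4) the isomorphism is the identity on lattice elements: an order-reversing bijection of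
   complete lattices carries primes to coprimes and basic opens to basic opens. *)

theory Submission
  imports Defs
begin

lemma dual_pair_tr: "dual_pair sa sb p \<Longrightarrow> dual_pair sb sa (tr p)"
  by (simp add: dual_pair_def tr_def)

lemma F_of_tr: "F_of (tr p) = G_of p"
  unfolding F_of_def G_of_def tr_def by auto

lemma G_of_tr: "G_of (tr p) = F_of p"
  unfolding F_of_def G_of_def tr_def by auto

lemma G_of_F_of_Max_of: "V \<in> Max_of p \<Longrightarrow> G_of p (F_of p V) = V"
  unfolding Max_of_def F_of_def G_of_def by auto

lemma G_of_Union: "G_of p (\<Union>Ws) = (\<Inter>W\<in>Ws. G_of p W)"
  unfolding G_of_def by auto

lemma subspace_F_of:
  assumes "dual_pair sa sb p"
  shows "module.subspace sb (F_of p V)"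
proof -
  have "module sb" and add: "\<And>x f g. p x (f + g) = p x f + p x g"
    and scale: "\<And>c x f. p x (sb c f) = c * p x f"
    using assms by (auto simp: dual_pair_def module_iff_vector_space)
  moreover have "p x 0 = 0" for x
    using add[of x 0 0] by simp
  ultimately show ?thesis
    by (simp add: module.subspace_def F_of_def)
qed

lemma subspace_G_of: "dual_pair sa sb p \<Longrightarrow> module.subspace sa (G_of p W)"
  using subspace_F_of[OF dual_pair_tr] by (simp add: F_of_tr)

lemma F_of_span:
  assumes "dual_pair sa sb p"
  shows "F_of p (module.span sa S) = F_of p S"
proof -
  have "module sa"
    using assms by (simp add: dual_pair_def module_iff_vector_space)
  moreover have "S \<subseteq> G_of p (F_of p S)"
    unfolding F_of_def G_of_def by auto
  ultimately have "module.span sa S \<subseteq> G_of p (F_of p S)"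
    using module.span_minimal subspace_G_of[OF assms] by blast
  moreover have "S \<subseteq> module.span sa S"
    using \<open>module sa\<close> module.span_superset by blast
  ultimately show ?thesis
    unfolding F_of_def G_of_def by auto
qed

lemma G_of_span: "dual_pair sa sb p \<Longrightarrow> G_of p (module.span sb S) = G_of p S"
  using F_of_span[OF dual_pair_tr] by (simp add: F_of_tr)

lemma span_F_of: "dual_pair sa sb p \<Longrightarrow> module.span sb (F_of p V) = F_of p V"
  using subspace_F_of by (metis dual_pair_def module.span_eq_iff module_iff_vector_space)

lemma F_of_join_of: "dual_pair sa sb p \<Longrightarrow> F_of p (join_of sa p Vs) = F_of p (\<Union>Vs)"
  unfolding join_of_def by (simp add: F_of_span) (auto simp: F_of_def G_of_def)

lemma join_of_tr: "dual_pair sa sb p \<Longrightarrow> join_of sb (tr p) Ws = F_of p (G_of p (\<Union>Ws))"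
  unfolding join_of_def by (simp add: F_of_tr G_of_tr G_of_span)

lemma restr_spectral:
  "spectral X \<kappa> \<Longrightarrow> restr s X \<kappa> U = module.span s {a. {x \<in> topspace X. a \<notin> \<kappa> x} \<subseteq> U}"
  unfolding restr_def spectral_def by (simp add: interior_of_openin)

lemma spectral_codual_if_cospectral:
  assumes "cospectral p X \<kappa>"
  shows "spectral X (F_of p \<circ> \<kappa>)"
  unfolding spectral_def
proof
  fix \<phi>
  have "G_of p {\<phi>} \<in> Max_of p"
    by (simp add: Max_of_def)
  with assms have "closedin X {x \<in> topspace X. \<kappa> x \<subseteq> G_of p {\<phi>}}"
    by (simp add: cospectral_def)
  moreover have "{x \<in> topspace X. \<phi> \<notin> (F_of p \<circ> \<kappa>) x}
      = topspace X - {x \<in> topspace X. \<kappa> x \<subseteq> G_of p {\<phi>}}"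
    by (auto simp: F_of_def G_of_def)
  ultimately show "openin X {x \<in> topspace X. \<phi> \<notin> (F_of p \<circ> \<kappa>) x}"
    by (simp add: openin_diff)
qed

lemma restr_codual_cospectral:
  assumes "dual_pair sa sb p" and "cospectral p X \<kappa>"
  shows "restr sb X (F_of p \<circ> \<kappa>) U = F_of p (corestr sa p X \<kappa> (topspace X - U))"
proof -
  have "{\<phi>. {x \<in> topspace X. \<phi> \<notin> (F_of p \<circ> \<kappa>) x} \<subseteq> U} = F_of p (\<Union>(\<kappa> ` (topspace X - U)))"
    by (auto simp: F_of_def)
  with assms show ?thesis
    by (simp add: restr_spectral spectral_codual_if_cospectral span_F_of corestr_def F_of_join_of)
qed

lemma corestr_codual_spectral:
  assumes "dual_pair sa sb p" and "qvb p X \<kappa>" and "spectral X \<kappa>" and "C \<subseteq> topspace X"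
  shows "corestr sb (tr p) X (F_of p \<circ> \<kappa>) C = F_of p (restr sa X \<kappa> (topspace X - C))"
proof -
  have "G_of p (F_of p (\<kappa> x)) = \<kappa> x" if "x \<in> C" for x
    using assms(2,4) that by (auto simp: qvb_def G_of_F_of_Max_of)
  then have "corestr sb (tr p) X (F_of p \<circ> \<kappa>) C = F_of p (\<Inter>(\<kappa> ` C))"
    using assms(1) by (simp add: corestr_def join_of_tr G_of_Union)
  moreover have "{a. {x \<in> topspace X. a \<notin> \<kappa> x} \<subseteq> topspace X - C} = \<Inter>(\<kappa> ` C)"
    using assms(4) by auto
  ultimately show ?thesis
    using assms by (simp add: restr_spectral F_of_span)
qed

lemma id_iso_complement:
  assumes "\<And>U. openin X U \<Longrightarrow> g1 U = g2 (topspace X - U)"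
  shows "id_iso {U. openin X U} (\<subseteq>) {C. closedin X C} (\<supseteq>) g1 g2 (\<lambda>U. topspace X - U)"
    and "id_iso {U. openin X U} (\<supseteq>) {C. closedin X C} (\<subseteq>) g1 g2 (\<lambda>U. topspace X - U)"
proof -
  have "bij_betw (\<lambda>U. topspace X - U) {U. openin X U} {C. closedin X C}"
    by (rule bij_betw_byWitness[where f' = "\<lambda>C. topspace X - C"])
      (auto dest: openin_subset closedin_subset simp: closedin_def)
  moreover have "U \<subseteq> V \<longleftrightarrow> topspace X - V \<subseteq> topspace X - U" if "openin X U" "openin X V" for U V
    using that by (auto dest: openin_subset)
  ultimately show
    "id_iso {U. openin X U} (\<subseteq>) {C. closedin X C} (\<supseteq>) g1 g2 (\<lambda>U. topspace X - U)"
    "id_iso {U. openin X U} (\<supseteq>) {C. closedin X C} (\<subseteq>) g1 g2 (\<lambda>U. topspace X - U)"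
    using assms unfolding id_iso_def by blast+
qed

lemma openin_topology_family:
  assumes "\<And>a b. \<exists>c. B a \<inter> B b = B c" and "\<And>A. \<exists>c. (\<Union>a\<in>A. B a) = B c"
  shows "openin (topology (\<lambda>U. \<exists>a. U = B a)) U \<longleftrightarrow> (\<exists>a. U = B a)"
proof -
  have "istopology (\<lambda>U. \<exists>a. U = B a)"
    unfolding istopology_def
  proof (intro conjI allI impI)
    fix S T assume "\<exists>a. S = B a" "\<exists>a. T = B a"
    then obtain a b where "S = B a" "T = B b"
      by blast
    with assms(1)[of a b] show "\<exists>c. S \<inter> T = B c"
      by simp
  next
    fix K assume "\<forall>S\<in>K. \<exists>a. S = B a"
    then have "K = B ` {a. B a \<in> K}"
      by (auto simp: image_iff)
    then have "\<Union>K = (\<Union>a\<in>{a. B a \<in> K}. B a)"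
      by (rule arg_cong)
    with assms(2) show "\<exists>c. \<Union>K = B c"
      by metis
  qed
  then show ?thesis
    by simp
qed

lemma openin_Sigma_top: "openin Sigma_top U \<longleftrightarrow> (\<exists>a. U = {p \<in> Sigma_pts. \<not> a \<le> p})"
  unfolding Sigma_top_def
proof (rule openin_topology_family)
  show "\<exists>c. {p \<in> Sigma_pts. \<not> a \<le> p} \<inter> {p \<in> Sigma_pts. \<not> b \<le> p} = {p \<in> Sigma_pts. \<not> c \<le> p}"
    for a b :: 'a
    by (rule exI[of _ "inf a b"]) (auto simp: Sigma_pts_def intro: le_infI1 le_infI2)
  show "\<exists>c. (\<Union>a\<in>A. {p \<in> Sigma_pts. \<not> a \<le> p}) = {p \<in> Sigma_pts. \<not> c \<le> p}" for A :: "'a set"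
    by (intro exI[of _ "Sup A"]) (auto simp: Sup_le_iff)
qed

lemma openin_I_top: "openin I_top U \<longleftrightarrow> (\<exists>a. U = I_pts - {c \<in> I_pts. c \<le> a})"
  unfolding I_top_def
proof (rule openin_topology_family)
  show "\<exists>d. (I_pts - {c \<in> I_pts. c \<le> a}) \<inter> (I_pts - {c \<in> I_pts. c \<le> b})
      = I_pts - {c \<in> I_pts. c \<le> d}" for a b :: 'a
    by (rule exI[of _ "sup a b"]) (auto simp: I_pts_def intro: le_supI1 le_supI2)
  show "\<exists>d. (\<Union>a\<in>A. I_pts - {c \<in> I_pts. c \<le> a}) = I_pts - {c \<in> I_pts. c \<le> d}" for A :: "'a set"
    by (rule exI[of _ "Inf A"]) (auto simp: le_Inf_iff)
qed

lemma topspace_Sigma_top: "topspace Sigma_top = Sigma_pts"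
proof -
  have "openin Sigma_top Sigma_pts"
    unfolding openin_Sigma_top by (rule exI[of _ top]) (auto simp: Sigma_pts_def top_le)
  moreover have "topspace Sigma_top \<subseteq> Sigma_pts"
    using openin_topspace[of Sigma_top] unfolding openin_Sigma_top by blast
  ultimately show ?thesis
    using openin_subset by blast
qed

lemma topspace_I_top: "topspace I_top = I_pts"
proof -
  have "openin I_top I_pts"
    unfolding openin_I_top by (rule exI[of _ bot]) (auto simp: I_pts_def le_bot)
  moreover have "topspace I_top \<subseteq> I_pts"
    using openin_topspace[of I_top] unfolding openin_I_top by blast
  ultimately show ?thesis
    using openin_subset by blast
qed

locale order_antiiso =
  fixes f :: "'a::complete_lattice \<Rightarrow> 'b::complete_lattice" and g :: "'b \<Rightarrow> 'a"
  assumes g_f [simp]: "g (f x) = x" and f_g [simp]: "f (g y) = y"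
    and f_le_f_iff [simp]: "f a \<le> f b \<longleftrightarrow> b \<le> a"
begin

lemma le_g_iff: "x \<le> g y \<longleftrightarrow> y \<le> f x"
  using f_le_f_iff[of "g y" x] by simp

lemma g_le_iff: "g y \<le> x \<longleftrightarrow> f x \<le> y"
  using f_le_f_iff[of x "g y"] by simp

lemma f_eq_bot_iff: "f x = bot \<longleftrightarrow> x = top"
proof
  assume "f x = bot"
  then have "f x \<le> f top"
    by simp
  then show "x = top"
    by (simp add: top_le)
next
  have "f top \<le> bot"
    using f_le_f_iff[of top "g bot"] by simp
  then show "x = top \<Longrightarrow> f x = bot"
    by (simp add: bot_unique)
qed

lemma f_inf: "f (inf a b) = sup (f a) (f b)"
proof (rule antisym)
  have "g (sup (f a) (f b)) \<le> inf a b"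
    by (simp add: g_le_iff)
  then show "f (inf a b) \<le> sup (f a) (f b)"
    by (simp only: g_le_iff)
qed simp

lemma f_mem_I_pts_iff: "f x \<in> I_pts \<longleftrightarrow> x \<in> Sigma_pts"
proof -
  have "(\<forall>c d. f x \<le> sup c d \<longrightarrow> f x \<le> c \<or> f x \<le> d)
      \<longleftrightarrow> (\<forall>a b. f x \<le> sup (f a) (f b) \<longrightarrow> f x \<le> f a \<or> f x \<le> f b)"
    by (metis f_g)
  then show ?thesis
    by (simp add: I_pts_def Sigma_pts_def f_eq_bot_iff flip: f_inf)
qed

lemma g_mem_Sigma_pts_iff: "g y \<in> Sigma_pts \<longleftrightarrow> y \<in> I_pts"
  using f_mem_I_pts_iff[of "g y"] by simp

lemma homeomorphic_map_Sigma_I: "homeomorphic_map Sigma_top I_top f"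
  unfolding homeomorphic_map_maps
proof
  have "continuous_map Sigma_top I_top f"
    unfolding continuous_map topspace_Sigma_top topspace_I_top openin_Sigma_top openin_I_top
  proof (intro conjI allI impI)
    show "f ` Sigma_pts \<subseteq> I_pts"
      by (auto simp: f_mem_I_pts_iff)
    fix U :: "'b set" assume "\<exists>a. U = I_pts - {c \<in> I_pts. c \<le> a}"
    then obtain a where "U = I_pts - {c \<in> I_pts. c \<le> a}"
      by blast
    then have "{x \<in> Sigma_pts. f x \<in> U} = {x \<in> Sigma_pts. \<not> g a \<le> x}"
      by (auto simp: f_mem_I_pts_iff g_le_iff)
    then show "\<exists>b. {x \<in> Sigma_pts. f x \<in> U} = {x \<in> Sigma_pts. \<not> b \<le> x}"
      by blast
  qed
  moreover have "continuous_map I_top Sigma_top g"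
    unfolding continuous_map topspace_Sigma_top topspace_I_top openin_Sigma_top openin_I_top
  proof (intro conjI allI impI)
    show "g ` I_pts \<subseteq> Sigma_pts"
      by (auto simp: g_mem_Sigma_pts_iff)
    fix U :: "'a set" assume "\<exists>a. U = {p \<in> Sigma_pts. \<not> a \<le> p}"
    then obtain a where "U = {p \<in> Sigma_pts. \<not> a \<le> p}"
      by blast
    then have "{y \<in> I_pts. g y \<in> U} = I_pts - {y \<in> I_pts. y \<le> f a}"
      by (auto simp: g_mem_Sigma_pts_iff le_g_iff)
    then show "\<exists>b. {y \<in> I_pts. g y \<in> U} = I_pts - {y \<in> I_pts. y \<le> b}"
      by blast
  qed
  ultimately show "homeomorphic_maps Sigma_top I_top f g"
    by (simp add: homeomorphic_maps_def)
qed

end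

lemma order_antiiso_undual: "order_antiiso undual dual"
  by unfold_locales (simp_all add: dual_less_eq_iff)

lemma order_antiiso_dual: "order_antiiso dual undual"
  by unfold_locales simp_all

theorem lemma6p9:
  fixes sa :: "complex \<Rightarrow> 'a::ab_group_add \<Rightarrow> 'a"
    and sb :: "complex \<Rightarrow> 'b::ab_group_add \<Rightarrow> 'b"
    and p :: "'a \<Rightarrow> 'b \<Rightarrow> complex"
  assumes "dual_pair sa sb p"
  shows
  "(\<forall>(X :: 'x topology) (\<kappa> :: 'x \<Rightarrow> 'a set). qvb p X \<kappa> \<and> cospectral p X \<kappa> \<longrightarrow>
      (\<forall>U. openin X U \<longrightarrow>
         restr sb X (F_of p \<circ> \<kappa>) U = F_of p (corestr sa p X \<kappa> (topspace X - U))) \<and>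
      id_iso {U. openin X U} (\<subseteq>) {C. closedin X C} (\<supseteq>)
        (restr sb X (F_of p \<circ> \<kappa>)) (\<lambda>C. F_of p (corestr sa p X \<kappa> C)) (\<lambda>U. topspace X - U))
   \<and>
   (\<forall>(X :: 'x topology) (\<kappa> :: 'x \<Rightarrow> 'a set). qvb p X \<kappa> \<and> spectral X \<kappa> \<longrightarrow>
      (\<forall>C. closedin X C \<longrightarrow>
         corestr sb (tr p) X (F_of p \<circ> \<kappa>) C = F_of p (restr sa X \<kappa> (topspace X - C))) \<and>
      id_iso {U. openin X U} (\<supseteq>) {C. closedin X C} (\<subseteq>)
        (\<lambda>U. F_of p (restr sa X \<kappa> U)) (corestr sb (tr p) X (F_of p \<circ> \<kappa>)) (\<lambda>U. topspace X - U))
   \<and>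
   (\<forall>\<gamma>c :: 'l::complete_lattice \<Rightarrow> 'a set.
      colocale_law TYPE('l) \<and> (\<forall>c. \<gamma>c c \<in> Max_of p) \<and>
      (\<forall>S. \<gamma>c (Sup S) = join_of sa p (\<gamma>c ` S)) \<longrightarrow>
      (\<exists>h :: 'l dual \<Rightarrow> 'l.
         homeomorphic_map (Sigma_top :: 'l dual topology) (I_top :: 'l topology) h \<and>
         (\<forall>q \<in> topspace (Sigma_top :: 'l dual topology).
            F_of p (\<gamma>c (h q)) = F_of p (\<gamma>c (undual q)))))
   \<and>
   (\<forall>\<gamma> :: 'm::complete_lattice \<Rightarrow> 'a set.
      frame_law TYPE('m) \<and> (\<forall>c. \<gamma> c \<in> Max_of p) \<and>
      (\<forall>S. \<gamma> (Inf S) = \<Inter> (\<gamma> ` S)) \<longrightarrow>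
      (\<exists>h :: 'm \<Rightarrow> 'm dual.
         homeomorphic_map (Sigma_top :: 'm topology) (I_top :: 'm dual topology) h \<and>
         (\<forall>q \<in> topspace (Sigma_top :: 'm topology).
            F_of p (\<gamma> (undual (h q))) = F_of p (\<gamma> q))))"
proof -
  have corestr_compl: "corestr sb (tr p) X (F_of p \<circ> \<kappa>) (topspace X - U) = F_of p (restr sa X \<kappa> U)"
    if "qvb p X \<kappa>" "spectral X \<kappa>" "openin X U" for X :: "'x topology" and \<kappa> U
    using corestr_codual_spectral[OF assms that(1,2), of "topspace X - U"] openin_subset[OF that(3)]
    by (simp add: Diff_Diff_Int Int_absorb1)
  show ?thesis
    by (intro conjI allI impI ballI exI[of _ undual] exI[of _ dual] id_iso_complement; (elim conjE)?)
      (simp_all add: assms restr_codual_cospectral corestr_codual_spectral closedin_subset corestr_compl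
        order_antiiso.homeomorphic_map_Sigma_I[OF order_antiiso_undual]
        order_antiiso.homeomorphic_map_Sigma_I[OF order_antiiso_dual])
qed

end
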